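(* Let $0<p<1/2$, let $1\le\ell\le L$ be integers, and let $\mu=2^{-n}\mathrm{Vol}(n,pn)$. Let $a,b,x_1,\dots,x_L,y_{\ell+1},\dots,y_L$ be chosen independently and uniformly at random from $\mathbb{F}_2^n$. Let $\mathcal{E}$ be the event that $\Delta(a,x_i)\le pn$ and $\Delta(b,x_i)\le pn$ for all $1\le i\le\ell$, and $\Delta(a,x_i)\le pn$ and $\Delta(b,y_i)\le pn$ for all $\ell+1\le i\le L$. Then, for all sufficiently large $n$ (with $pn$ an integer), $$\Pr[\mathcal{E}]\le\min\left(\mu^{2L-\ell+1},\ 2^{-n}\cdot\mu^{2L-\ell}\cdot C_p^L\cdot n^{L/2}\cdot(1+2^{-\alpha_p\ell})^n\right),$$ where $\alpha_p=\frac12\log_2\frac{1}{4p(1-p)}$ and $C_p>0$ is a constant depending only on $p$ for which $\frac{\mathrm{Vol}(n,pn;d)}{\mathrm{Vol}(n,pn)}\le 2^{-\alpha_p d}C_p\sqrt{n}$ for all $1\le d\le n$ and all sufficiently large $n$.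
   Context: $\Delta$ is Hamming distance on $\mathbb{F}_2^n$, $\mathrm{Vol}(n,r)=|\{y:\Delta(0^n,y)\le r\}|$, and $\mathrm{Vol}(n,pn;d)=|\{y:\Delta(0^n,y)\le pn,\ \Delta(1^d0^{n-d},y)\le pn\}|$. *)

theory Defs
  imports "HOL-Analysis.Analysis"
begin

text \<open>Vectors of F_2^n are represented by their supports, i.e. subsets of {..<n}.
  The all-zero vector is {} and the vector 1^d 0^(n-d) is {..<d}.\<close>

definition cube :: "nat \<Rightarrow> nat set set" where
  "cube n = Pow {..<n}"

definition hamming :: "nat set \<Rightarrow> nat set \<Rightarrow> nat" where
  "hamming x y = card ((x - y) \<union> (y - x))"

definition Vol :: "nat \<Rightarrow> real \<Rightarrow> nat" where
  "Vol n r = card {y \<in> cube n. real (hamming {} y) \<le> r}"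

definition Vol2 :: "nat \<Rightarrow> real \<Rightarrow> nat \<Rightarrow> nat" where
  "Vol2 n r d = card {y \<in> cube n. real (hamming {} y) \<le> r \<and> real (hamming {..<d} y) \<le> r}"

definition alpha_p :: "real \<Rightarrow> real" where
  "alpha_p p = (1/2) * log 2 (1 / (4 * p * (1 - p)))"

definition event_E :: "nat \<Rightarrow> real \<Rightarrow> nat \<Rightarrow> nat \<Rightarrow> nat set \<Rightarrow> nat set
    \<Rightarrow> (nat \<Rightarrow> nat set) \<Rightarrow> (nat \<Rightarrow> nat set) \<Rightarrow> bool" where
  "event_E n p l L a b x y \<longleftrightarrow>
     (\<forall>i\<in>{1..l}. real (hamming a (x i)) \<le> p * n \<and> real (hamming b (x i)) \<le> p * n) \<and>
     (\<forall>i\<in>{l+1..L}. real (hamming a (x i)) \<le> p * n \<and> real (hamming b (y i)) \<le> p * n)"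

text \<open>Probability of E when a, b, x_1..x_L, y_(l+1)..y_L are independent and uniform
  on F_2^n: number of favourable outcomes over the number of outcomes.\<close>
definition prob_E :: "nat \<Rightarrow> real \<Rightarrow> nat \<Rightarrow> nat \<Rightarrow> real" where
  "prob_E n p l L =
     real (card {(a, b, x, y). a \<in> cube n \<and> b \<in> cube n \<and>
                   x \<in> (\<Pi>\<^sub>E i\<in>{1..L}. cube n) \<and> y \<in> (\<Pi>\<^sub>E i\<in>{l+1..L}. cube n) \<and>
                   event_E n p l L a b x y})
     / real (card (cube n \<times> cube n \<times> (\<Pi>\<^sub>E i\<in>{1..L}. cube n) \<times> (\<Pi>\<^sub>E i\<in>{l+1..L}. cube n)))"

end

theory Submission
  imports Defs
begin

text \<open>Write B(a) for the Hamming ball of radius pn around a. The favourable outcomes number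
  \<Sum> over a, b of |B(a) \<inter> B(b)|^l \<cdot> Vol^(2(L-l)), and since translations and coordinate
  permutations are isometries of the cube, |B(a) \<inter> B(b)| = Vol(n,pn;\<Delta>(a,b)).
  For the first bound, |B(a) \<inter> B(b)| \<le> Vol and double counting gives
  \<Sum> over b of |B(a) \<inter> B(b)| = Vol^2. For the second, the hypothesis on Vol(n,pn;d)/Vol(n,pn)
  gives |B(a) \<inter> B(b)|^l \<le> Vol^l (C \<surd>n)^L t^\<Delta>(a,b) with t = 2^(-\<alpha> l), and
  \<Sum> over b of t^\<Delta>(a,b) is (1 + t)^n.\<close>

definition hamming_ball :: "nat \<Rightarrow> real \<Rightarrow> nat set \<Rightarrow> nat set set" where
  "hamming_ball n r a = {x \<in> cube n. real (hamming a x) \<le> r}"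

lemma finite_cube [simp]: "finite (cube n)"
  by (simp add: cube_def)

lemma finite_hamming_ball [simp]: "finite (hamming_ball n r a)"
  by (simp add: hamming_ball_def)

lemma card_cube: "card (cube n) = 2 ^ n"
  by (simp add: cube_def card_Pow)

lemma sym_diff_in_cube: "x \<in> cube n \<Longrightarrow> a \<in> cube n \<Longrightarrow> sym_diff x a \<in> cube n"
  by (auto simp: cube_def)

lemma hamming_commute: "hamming x y = hamming y x"
  by (simp add: hamming_def Un_commute)

lemma hamming_translate: "hamming (sym_diff x a) (sym_diff y a) = hamming x y"
  unfolding hamming_def by (rule arg_cong[where f = card]) blast

lemma hamming_image:
  assumes "inj_on f A" and "x \<subseteq> A" and "y \<subseteq> A"
  shows "hamming (f ` x) (f ` y) = hamming x y"
proof -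
  have "sym_diff (f ` x) (f ` y) = f ` sym_diff x y"
    using assms unfolding inj_on_def by blast
  moreover have "inj_on f (sym_diff x y)"
    using assms by (blast intro: inj_on_subset)
  ultimately show ?thesis
    by (simp add: hamming_def card_image)
qed

lemma hamming_le: "x \<in> cube n \<Longrightarrow> y \<in> cube n \<Longrightarrow> hamming x y \<le> n"
  unfolding hamming_def cube_def
  by (metis Pow_iff card_lessThan card_mono finite_lessThan Diff_subset le_supI subset_trans)

lemma bij_betw_translate_cube:
  "a \<in> cube n \<Longrightarrow> bij_betw (\<lambda>x. sym_diff x a) (cube n) (cube n)"
  by (rule bij_betw_byWitness[where f' = "\<lambda>x. sym_diff x a"]) (auto simp: cube_def)

lemma bij_betw_image_cube:
  "bij_betw f {..<n} {..<n} \<Longrightarrow> bij_betw ((`) f) (cube n) (cube n)"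
  unfolding cube_def by (rule bij_betw_Pow)

lemma exists_bij_betw_onto_subset:
  assumes "finite A" and "B \<subseteq> A" and "C \<subseteq> A" and "card B = card C"
  shows "\<exists>f. bij_betw f A A \<and> f ` B = C"
proof -
  have "finite B" "finite C" "finite (A - B)" "finite (A - C)"
    using assms by (auto intro: finite_subset)
  moreover have "card (A - B) = card (A - C)"
    using assms by (simp add: card_Diff_subset finite_subset)
  ultimately obtain g h where g: "bij_betw g B C" and h: "bij_betw h (A - B) (A - C)"
    using assms(4) finite_same_card_bij by metis
  define f where "f x = (if x \<in> B then g x else h x)" for x
  have "bij_betw f B C" "bij_betw f (A - B) (A - C)"
    using g h by (auto simp: f_def intro: bij_betw_cong[THEN iffD1, rotated])
  then have "bij_betw f (B \<union> (A - B)) (C \<union> (A - C))"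
    by (rule bij_betw_combine) blast
  moreover have "B \<union> (A - B) = A" "C \<union> (A - C) = A"
    using assms by auto
  ultimately show ?thesis
    using \<open>bij_betw f B C\<close> by (auto simp: bij_betw_def)
qed

lemma card_hamming_ball_inter_isometry:
  assumes g: "bij_betw g (cube n) (cube n)"
    and iso: "\<And>x y. x \<in> cube n \<Longrightarrow> y \<in> cube n \<Longrightarrow> hamming (g x) (g y) = hamming x y"
    and "a \<in> cube n" and "b \<in> cube n"
  shows "card (hamming_ball n r (g a) \<inter> hamming_ball n r (g b))
       = card (hamming_ball n r a \<inter> hamming_ball n r b)"
proof -
  have "g ` (hamming_ball n r a \<inter> hamming_ball n r b)
      = hamming_ball n r (g a) \<inter> hamming_ball n r (g b)"
  proof (intro equalityI subsetI)
    fix z assume z: "z \<in> hamming_ball n r (g a) \<inter> hamming_ball n r (g b)"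
    then obtain x where "x \<in> cube n" "z = g x"
      using g by (auto simp: hamming_ball_def bij_betw_def)
    with z show "z \<in> g ` (hamming_ball n r a \<inter> hamming_ball n r b)"
      using assms(3,4) by (auto simp: hamming_ball_def iso)
  qed (use g assms(3,4) in \<open>auto simp: hamming_ball_def bij_betw_def iso\<close>)
  moreover have "inj_on g (hamming_ball n r a \<inter> hamming_ball n r b)"
    using g by (auto simp: bij_betw_def hamming_ball_def intro: inj_on_subset)
  ultimately show ?thesis
    by (metis card_image)
qed

lemma card_hamming_ball_inter:
  assumes a: "a \<in> cube n" and b: "b \<in> cube n"
  shows "card (hamming_ball n r a \<inter> hamming_ball n r b) = Vol2 n r (hamming a b)"
proof -
  let ?c = "sym_diff b a"
  have c: "?c \<in> cube n"
    using b a by (rule sym_diff_in_cube)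
  obtain f where f: "bij_betw f {..<n} {..<n}" "f ` ?c = {..<card ?c}"
    using exists_bij_betw_onto_subset[of "{..<n}" ?c "{..<card ?c}"] c hamming_le[OF b a]
    by (auto simp: cube_def hamming_def)
  have "card (hamming_ball n r a \<inter> hamming_ball n r b)
      = card (hamming_ball n r {} \<inter> hamming_ball n r ?c)"
    using card_hamming_ball_inter_isometry[OF bij_betw_translate_cube[OF a] hamming_translate a b]
    by (simp add: Diff_eq)
  also have "\<dots> = card (hamming_ball n r (f ` {}) \<inter> hamming_ball n r (f ` ?c))"
    using card_hamming_ball_inter_isometry[OF bij_betw_image_cube[OF f(1)] _ _ c, of "{}"] f(1)
    by (auto simp: hamming_image bij_betw_def cube_def)
  also have "\<dots> = Vol2 n r (hamming a b)"
    using hamming_commute[of b a]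
    by (simp add: f(2) Vol2_def hamming_ball_def hamming_def Int_def conj_ac)
  finally show ?thesis .
qed

lemma Vol2_zero: "Vol2 n r 0 = Vol n r"
  by (simp add: Vol2_def Vol_def)

lemma Vol2_le_Vol: "Vol2 n r d \<le> Vol n r"
  unfolding Vol2_def Vol_def by (rule card_mono) auto

lemma Vol_pos: "0 \<le> r \<Longrightarrow> 0 < Vol n r"
  unfolding Vol_def by (subst card_gt_0_iff) (auto simp: cube_def hamming_def)

lemma card_hamming_ball: "a \<in> cube n \<Longrightarrow> card (hamming_ball n r a) = Vol n r"
  using card_hamming_ball_inter[of a n a r] by (simp add: hamming_def Vol2_zero)

lemma sum_card_hamming_ball_inter:
  assumes "a \<in> cube n"
  shows "(\<Sum>b\<in>cube n. card (hamming_ball n r a \<inter> hamming_ball n r b)) = Vol n r ^ 2"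
proof -
  have "(\<Sum>b\<in>cube n. card (hamming_ball n r a \<inter> hamming_ball n r b))
      = (\<Sum>b\<in>cube n. \<Sum>x\<in>hamming_ball n r a. of_bool (x \<in> hamming_ball n r b))"
    by (simp add: Int_def)
  also have "\<dots> = (\<Sum>x\<in>hamming_ball n r a. \<Sum>b\<in>cube n. of_bool (b \<in> hamming_ball n r x))"
    by (subst sum.swap) (auto intro!: sum.cong simp: hamming_ball_def hamming_commute)
  also have "\<dots> = (\<Sum>x\<in>hamming_ball n r a. Vol n r)"
    by (intro sum.cong refl) (auto simp: Int_def hamming_ball_def card_hamming_ball[unfolded hamming_ball_def])
  also have "\<dots> = Vol n r ^ 2"
    using card_hamming_ball[OF assms] by (simp add: power2_eq_square)
  finally show ?thesis .
qed

lemma sum_power_card_cube: "(\<Sum>c\<in>cube n. t ^ card c) = (1 + t) ^ n"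
  for t :: "'a :: comm_semiring_1"
  using prod_add[of "{..<n}" "\<lambda>_. t" "\<lambda>_. 1"] by (simp add: cube_def add.commute)

lemma sum_power_hamming:
  "a \<in> cube n \<Longrightarrow> (\<Sum>b\<in>cube n. t ^ hamming a b) = (1 + t) ^ n"
  for t :: "'a :: comm_semiring_1"
  using sum.reindex_bij_betw[OF bij_betw_translate_cube, of a n "\<lambda>c. t ^ card c"]
  by (simp add: sum_power_card_cube hamming_def Un_commute)

lemma sum_Vol2_power_le_Vol_power:
  assumes "a \<in> cube n" and "1 \<le> l"
  shows "(\<Sum>b\<in>cube n. real (Vol2 n r (hamming a b)) ^ l) \<le> real (Vol n r) ^ (l + 1)"
proof -
  let ?V = "real (Vol n r)"
  have "(\<Sum>b\<in>cube n. real (Vol2 n r (hamming a b)) ^ l)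
      \<le> (\<Sum>b\<in>cube n. ?V ^ (l - 1) * real (Vol2 n r (hamming a b)))"
  proof (rule sum_mono)
    fix b
    have "real (Vol2 n r (hamming a b)) ^ l
        = real (Vol2 n r (hamming a b)) ^ (l - 1) * real (Vol2 n r (hamming a b))"
      using assms(2) by (simp flip: power_Suc2)
    also have "\<dots> \<le> ?V ^ (l - 1) * real (Vol2 n r (hamming a b))"
      by (intro mult_right_mono power_mono) (simp_all add: Vol2_le_Vol)
    finally show "real (Vol2 n r (hamming a b)) ^ l \<le> ?V ^ (l - 1) * real (Vol2 n r (hamming a b))" .
  qed
  also have "\<dots> = ?V ^ (l - 1) * ?V ^ 2"
    using sum_card_hamming_ball_inter[OF assms(1), of r] card_hamming_ball_inter[OF assms(1)]
    by (simp flip: sum_distrib_left of_nat_sum)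
  also have "\<dots> = ?V ^ (l + 1)"
    using assms(2) by (simp flip: power_add)
  finally show ?thesis .
qed

lemma Vol2_power_le:
  fixes r C \<alpha> :: real
  assumes "0 \<le> r" and "d \<le> n" and "l \<le> L" and "1 \<le> C * sqrt n"
    and ratio: "\<And>d. 1 \<le> d \<Longrightarrow> d \<le> n \<Longrightarrow>
      real (Vol2 n r d) / real (Vol n r) \<le> 2 powr (- \<alpha> * d) * C * sqrt n"
  shows "real (Vol2 n r d) ^ l \<le> real (Vol n r) ^ l * (C * sqrt n) ^ L * (2 powr (- \<alpha> * l)) ^ d"
proof (cases "d = 0")
  case True
  have "real (Vol2 n r d) ^ l \<le> real (Vol n r) ^ l"
    by (simp add: power_mono Vol2_le_Vol)
  also have "\<dots> \<le> real (Vol n r) ^ l * (C * sqrt n) ^ L"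
    using assms(4) by (simp add: mult_le_cancel_left1 one_le_power)
  finally show ?thesis
    using True by simp
next
  case False
  let ?V = "real (Vol n r)"
  have "real (Vol2 n r d) \<le> 2 powr (- \<alpha> * d) * (C * sqrt n) * ?V"
    using ratio[of d] False assms(2) Vol_pos[OF assms(1), of n]
    by (simp add: pos_divide_le_eq mult.assoc)
  then have "real (Vol2 n r d) ^ l \<le> (2 powr (- \<alpha> * d) * (C * sqrt n) * ?V) ^ l"
    by (rule power_mono) simp
  also have "\<dots> = ?V ^ l * (C * sqrt n) ^ l * (2 powr (- \<alpha> * l)) ^ d"
    by (simp add: power_mult_distrib powr_power powr_powr mult_ac)
  also have "\<dots> \<le> ?V ^ l * (C * sqrt n) ^ L * (2 powr (- \<alpha> * l)) ^ d"
    using assms(3,4) by (intro mult_right_mono mult_left_mono power_increasing) simp_all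
  finally show ?thesis .
qed

lemma sum_Vol2_power_le:
  fixes r C \<alpha> :: real
  assumes "a \<in> cube n" and "0 \<le> r" and "l \<le> L" and "1 \<le> C * sqrt n"
    and "\<And>d. 1 \<le> d \<Longrightarrow> d \<le> n \<Longrightarrow>
      real (Vol2 n r d) / real (Vol n r) \<le> 2 powr (- \<alpha> * d) * C * sqrt n"
  shows "(\<Sum>b\<in>cube n. real (Vol2 n r (hamming a b)) ^ l)
       \<le> real (Vol n r) ^ l * (C * sqrt n) ^ L * (1 + 2 powr (- \<alpha> * l)) ^ n"
proof -
  have "(\<Sum>b\<in>cube n. real (Vol2 n r (hamming a b)) ^ l)
      \<le> (\<Sum>b\<in>cube n. real (Vol n r) ^ l * (C * sqrt n) ^ L * (2 powr (- \<alpha> * l)) ^ hamming a b)"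
    using assms by (intro sum_mono Vol2_power_le hamming_le) auto
  also have "\<dots> = real (Vol n r) ^ l * (C * sqrt n) ^ L * (1 + 2 powr (- \<alpha> * l)) ^ n"
    by (simp add: sum_distrib_left[symmetric] sum_power_hamming[OF assms(1)])
  finally show ?thesis .
qed

lemma card_PiE_if_le:
  assumes "l \<le> L"
  shows "card (\<Pi>\<^sub>E i\<in>{1..L}. if i \<le> l then A else B) = card A ^ l * card B ^ (L - l)"
proof -
  have "{1..L} = {1..l} \<union> {l+1..L}"
    using assms by auto
  then have "(\<Prod>i\<in>{1..L}. card (if i \<le> l then A else B))
      = (\<Prod>i\<in>{1..l}. card (if i \<le> l then A else B)) * (\<Prod>i\<in>{l+1..L}. card (if i \<le> l then A else B))"
    by (simp add: prod.union_disjoint)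
  also have "\<dots> = card A ^ l * card B ^ (L - l)"
    by simp
  finally show ?thesis
    by (simp add: card_PiE)
qed

lemma event_E_outcomes_eq_Sigma:
  fixes p :: real and n :: nat
  assumes "l \<le> L"
  defines "B \<equiv> hamming_ball n (p * n)"
  shows "{(a, b, x, y). a \<in> cube n \<and> b \<in> cube n \<and>
            x \<in> (\<Pi>\<^sub>E i\<in>{1..L}. cube n) \<and> y \<in> (\<Pi>\<^sub>E i\<in>{l+1..L}. cube n) \<and>
            event_E n p l L a b x y}
       = (SIGMA a:cube n. SIGMA b:cube n.
            (\<Pi>\<^sub>E i\<in>{1..L}. if i \<le> l then B a \<inter> B b else B a) \<times> (\<Pi>\<^sub>E i\<in>{l+1..L}. B b))"
proof -
  have x: "x \<in> (\<Pi>\<^sub>E i\<in>{1..L}. if i \<le> l then B a \<inter> B b else B a) \<longleftrightarrow>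
      x \<in> (\<Pi>\<^sub>E i\<in>{1..L}. cube n) \<and>
      (\<forall>i\<in>{1..l}. real (hamming a (x i)) \<le> p * n \<and> real (hamming b (x i)) \<le> p * n) \<and>
      (\<forall>i\<in>{l+1..L}. real (hamming a (x i)) \<le> p * n)" for a b x
    using assms(1) by (auto simp: PiE_iff B_def hamming_ball_def)
  have y: "y \<in> (\<Pi>\<^sub>E i\<in>{l+1..L}. B b) \<longleftrightarrow>
      y \<in> (\<Pi>\<^sub>E i\<in>{l+1..L}. cube n) \<and> (\<forall>i\<in>{l+1..L}. real (hamming b (y i)) \<le> p * n)" for b y
    by (auto simp: PiE_iff B_def hamming_ball_def)
  show ?thesis
    unfolding set_eq_iff split_paired_All
    by (simp only: x y event_E_def mem_Sigma_iff mem_Collect_eq prod.case mem_Times_iff fst_conv snd_conv)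
      blast
qed

lemma card_event_E_outcomes:
  fixes p :: real
  assumes "l \<le> L"
  shows "card {(a, b, x, y). a \<in> cube n \<and> b \<in> cube n \<and>
            x \<in> (\<Pi>\<^sub>E i\<in>{1..L}. cube n) \<and> y \<in> (\<Pi>\<^sub>E i\<in>{l+1..L}. cube n) \<and>
            event_E n p l L a b x y}
       = (\<Sum>a\<in>cube n. \<Sum>b\<in>cube n. Vol2 n (p * n) (hamming a b) ^ l) * Vol n (p * n) ^ (2 * (L - l))"
proof -
  let ?B = "hamming_ball n (p * n)"
  have "card {(a, b, x, y). a \<in> cube n \<and> b \<in> cube n \<and>
            x \<in> (\<Pi>\<^sub>E i\<in>{1..L}. cube n) \<and> y \<in> (\<Pi>\<^sub>E i\<in>{l+1..L}. cube n) \<and>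
            event_E n p l L a b x y}
      = (\<Sum>a\<in>cube n. \<Sum>b\<in>cube n.
           card ((\<Pi>\<^sub>E i\<in>{1..L}. if i \<le> l then ?B a \<inter> ?B b else ?B a) \<times> (\<Pi>\<^sub>E i\<in>{l+1..L}. ?B b)))"
    unfolding event_E_outcomes_eq_Sigma[OF assms] by (simp add: finite_PiE)
  also have "\<dots> = (\<Sum>a\<in>cube n. \<Sum>b\<in>cube n. card (?B a \<inter> ?B b) ^ l * card (?B a) ^ (L - l) * card (?B b) ^ (L - l))"
    unfolding card_cartesian_product card_PiE_if_le[OF assms] by (simp add: card_PiE)
  also have "\<dots> = (\<Sum>a\<in>cube n. \<Sum>b\<in>cube n. Vol2 n (p * n) (hamming a b) ^ l * Vol n (p * n) ^ (2 * (L - l)))"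
    by (intro sum.cong refl) (simp add: card_hamming_ball_inter card_hamming_ball mult_2 power_add)
  finally show ?thesis
    by (simp add: sum_distrib_right)
qed

lemma prob_E_le:
  fixes p K :: real
  assumes "l \<le> L"
    and K: "\<And>a. a \<in> cube n \<Longrightarrow> (\<Sum>b\<in>cube n. real (Vol2 n (p * n) (hamming a b)) ^ l) \<le> K"
  shows "prob_E n p l L \<le> K * real (Vol n (p * n)) ^ (2 * (L - l)) / 2 ^ (n * (2 * L - l + 1))"
proof -
  let ?V = "real (Vol n (p * n))"
  have "real (card (cube n \<times> cube n \<times> (\<Pi>\<^sub>E i\<in>{1..L}. cube n) \<times> (\<Pi>\<^sub>E i\<in>{l+1..L}. cube n)))
      = 2 ^ n * 2 ^ (n * (1 + L + (L - l)))"
    by (simp add: card_cartesian_product card_PiE card_cube power_add power_mult)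
  also have "1 + L + (L - l) = 2 * L - l + 1"
    using assms(1) by simp
  finally have outcomes: "real (card (cube n \<times> cube n \<times> (\<Pi>\<^sub>E i\<in>{1..L}. cube n) \<times> (\<Pi>\<^sub>E i\<in>{l+1..L}. cube n)))
      = 2 ^ n * 2 ^ (n * (2 * L - l + 1))" .
  have "(\<Sum>a\<in>cube n. \<Sum>b\<in>cube n. real (Vol2 n (p * n) (hamming a b)) ^ l) \<le> 2 ^ n * K"
    using sum_mono[of "cube n" _ "\<lambda>_. K"] K by (simp add: card_cube)
  then have "real (card {(a, b, x, y). a \<in> cube n \<and> b \<in> cube n \<and>
            x \<in> (\<Pi>\<^sub>E i\<in>{1..L}. cube n) \<and> y \<in> (\<Pi>\<^sub>E i\<in>{l+1..L}. cube n) \<and>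
            event_E n p l L a b x y}) \<le> 2 ^ n * K * ?V ^ (2 * (L - l))"
    unfolding card_event_E_outcomes[OF assms(1)] by (simp add: mult_right_mono)
  then have "prob_E n p l L \<le> 2 ^ n * K * ?V ^ (2 * (L - l)) / (2 ^ n * 2 ^ (n * (2 * L - l + 1)))"
    unfolding prob_E_def outcomes by (rule divide_right_mono) simp
  then show ?thesis
    by (simp add: mult.assoc)
qed

lemma prob_E_le_power:
  fixes p :: real
  assumes "1 \<le> l" and "l \<le> L"
  shows "prob_E n p l L \<le> (real (Vol n (p * n)) / 2 ^ n) ^ (2 * L - l + 1)"
proof -
  let ?V = "real (Vol n (p * n))"
  have "prob_E n p l L \<le> ?V ^ (l + 1) * ?V ^ (2 * (L - l)) / 2 ^ (n * (2 * L - l + 1))"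
    using assms by (intro prob_E_le sum_Vol2_power_le_Vol_power)
  also have "\<dots> = ?V ^ (l + 1 + 2 * (L - l)) / (2 ^ n) ^ (2 * L - l + 1)"
    by (simp add: power_add power_mult)
  also have "l + 1 + 2 * (L - l) = 2 * L - l + 1"
    using assms(2) by simp
  finally show ?thesis
    by (simp add: power_divide)
qed

lemma prob_E_le_decay:
  fixes p C \<alpha> :: real
  assumes "0 \<le> p" and "l \<le> L" and "1 \<le> C * sqrt n"
    and "\<And>d. 1 \<le> d \<Longrightarrow> d \<le> n \<Longrightarrow>
      real (Vol2 n (p * n) d) / real (Vol n (p * n)) \<le> 2 powr (- \<alpha> * d) * C * sqrt n"
  shows "prob_E n p l L \<le> (1 / 2 ^ n) * (real (Vol n (p * n)) / 2 ^ n) ^ (2 * L - l)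
           * C ^ L * sqrt n ^ L * (1 + 2 powr (- \<alpha> * l)) ^ n"
proof -
  let ?V = "real (Vol n (p * n))"
  have "prob_E n p l L \<le> ?V ^ l * (C * sqrt n) ^ L * (1 + 2 powr (- \<alpha> * l)) ^ n * ?V ^ (2 * (L - l))
          / 2 ^ (n * (2 * L - l + 1))"
    using assms by (intro prob_E_le sum_Vol2_power_le) auto
  also have "\<dots> = (1 / 2 ^ n) * (?V ^ (l + 2 * (L - l)) / (2 ^ n) ^ (2 * L - l))
          * C ^ L * sqrt n ^ L * (1 + 2 powr (- \<alpha> * l)) ^ n"
    by (simp add: power_add power_mult power_mult_distrib)
  also have "l + 2 * (L - l) = 2 * L - l"
    using assms(2) by simp
  finally show ?thesis
    by (simp add: power_divide)
qed

theorem lemma10: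
  fixes p C :: real and l L :: nat
  assumes "0 < p" and "p < 1/2"
    and "1 \<le> l" and "l \<le> L"
    and "C > 0"
    and "\<exists>N0. \<forall>n\<ge>N0. p * real n \<in> \<int> \<longrightarrow> (\<forall>d. 1 \<le> d \<and> d \<le> n \<longrightarrow>
            real (Vol2 n (p * real n) d) / real (Vol n (p * real n))
              \<le> 2 powr (- alpha_p p * real d) * C * sqrt (real n))"
  shows "\<exists>N. \<forall>n\<ge>N. p * real n \<in> \<int> \<longrightarrow>
     (let \<mu> = real (Vol n (p * real n)) / 2 ^ n in
      prob_E n p l L \<le> min (\<mu> ^ (2 * L - l + 1))
        ((1 / 2 ^ n) * \<mu> ^ (2 * L - l) * C ^ L * sqrt (real n) ^ L
          * (1 + 2 powr (- alpha_p p * real l)) ^ n))"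
proof -
  obtain N0 where ratio: "\<forall>n\<ge>N0. p * real n \<in> \<int> \<longrightarrow> (\<forall>d. 1 \<le> d \<and> d \<le> n \<longrightarrow>
      real (Vol2 n (p * real n) d) / real (Vol n (p * real n))
        \<le> 2 powr (- alpha_p p * real d) * C * sqrt (real n))"
    using assms(6) by blast
  have "prob_E n p l L \<le> min ((real (Vol n (p * n)) / 2 ^ n) ^ (2 * L - l + 1))
          ((1 / 2 ^ n) * (real (Vol n (p * n)) / 2 ^ n) ^ (2 * L - l) * C ^ L * sqrt n ^ L
            * (1 + 2 powr (- alpha_p p * l)) ^ n)"
    if n: "max N0 (nat \<lceil>1 / C\<^sup>2\<rceil>) \<le> n" and "p * n \<in> \<int>" for n
    \<comment> \<open>Beyond the hypothesis on Vol2, only C \<surd>n \<ge> 1 is used.\<close>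
  proof -
    have "1 / C\<^sup>2 \<le> n"
      using n by linarith
    then have "1 \<le> C * sqrt n"
      using assms(5) real_le_rsqrt[of "1 / C"] by (simp add: power_divide field_simps)
    moreover have "\<And>d. 1 \<le> d \<Longrightarrow> d \<le> n \<Longrightarrow> real (Vol2 n (p * n) d) / real (Vol n (p * n))
        \<le> 2 powr (- alpha_p p * d) * C * sqrt n"
      using ratio that by auto
    ultimately show ?thesis
      unfolding min.bounded_iff using assms(1,3,4)
      by (intro conjI prob_E_le_power prob_E_le_decay) simp_all
  qed
  then show ?thesis
    unfolding Let_def by blast
qed

end
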